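(* For every integer $n\ge 1$, $$m^*(n,3,2)=\min\Big\{m : \binom{m}{2}-K(m,2,3,1)\ge n\Big\}=\lceil 2\sqrt{n}\rceil.$$
   Context: For positive integers $s,u,v,e$, $K(s,u,v,e)$ is the smallest number of binary vectors of length $s$ and weight $u$ such that every binary vector of length $s$ and weight $v$ is at Hamming distance at most $e$ from at least one of them. For a binary matrix $M$ and a nonempty set $S$ of its columns, $S$ is a stopping set if the submatrix formed by $S$ has no row with exactly one $1$; $s(M)$ is the minimum size of a stopping set ($+\infty$ if none). $M$ is $(d,k)$-decodable if $s(M)\ge d+1$ and every column has exactly $k$ ones; $m^*(n,d,k)$ is the minimum $m$ such that an $m\times n$ $(d,k)$-decodable binary matrix exists. *)

theory Defs
  imports Complex_Main "HOL-Library.Extended_Nat"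
begin

(* Binary vectors of length s are represented by their supports: subsets of {..<s}.
   Weight = card, Hamming distance = card of the symmetric difference. *)
definition hdist :: "nat set \<Rightarrow> nat set \<Rightarrow> nat" where
  "hdist A B = card ((A - B) \<union> (B - A))"

definition covering :: "nat \<Rightarrow> nat \<Rightarrow> nat \<Rightarrow> nat \<Rightarrow> nat set set \<Rightarrow> bool" where
  "covering s u v e C \<longleftrightarrow>
     C \<subseteq> {A. A \<subseteq> {..<s} \<and> card A = u} \<and>
     (\<forall>B. B \<subseteq> {..<s} \<and> card B = v \<longrightarrow> (\<exists>A\<in>C. hdist A B \<le> e))"

definition K :: "nat \<Rightarrow> nat \<Rightarrow> nat \<Rightarrow> nat \<Rightarrow> nat" where
  "K s u v e = (LEAST N. \<exists>C. covering s u v e C \<and> card C = N)"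

(* An m x n binary matrix is M :: nat => nat => bool, entry (i,j) = M i j, for i<m, j<n. *)
definition stopping_set :: "nat \<Rightarrow> nat \<Rightarrow> (nat \<Rightarrow> nat \<Rightarrow> bool) \<Rightarrow> nat set \<Rightarrow> bool" where
  "stopping_set m n M S \<longleftrightarrow>
     S \<noteq> {} \<and> S \<subseteq> {..<n} \<and> (\<forall>i<m. card {j\<in>S. M i j} \<noteq> 1)"

(* s(M): minimum size of a stopping set, infinity if there is none *)
definition stop_num :: "nat \<Rightarrow> nat \<Rightarrow> (nat \<Rightarrow> nat \<Rightarrow> bool) \<Rightarrow> enat" where
  "stop_num m n M = Inf ((\<lambda>S. enat (card S)) ` {S. stopping_set m n M S})"

definition decodable :: "nat \<Rightarrow> nat \<Rightarrow> nat \<Rightarrow> nat \<Rightarrow> (nat \<Rightarrow> nat \<Rightarrow> bool) \<Rightarrow> bool" where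
  "decodable m n d k M \<longleftrightarrow>
     stop_num m n M \<ge> enat (d + 1) \<and> (\<forall>j<n. card {i. i < m \<and> M i j} = k)"

definition mstar :: "nat \<Rightarrow> nat \<Rightarrow> nat \<Rightarrow> nat" where
  "mstar n d k = (LEAST m. \<exists>M. decodable m n d k M)"

end

theory Submission
  imports Defs
begin

text \<open>A matrix whose columns all have weight 2 is a multigraph on the rows, one edge per column,
and a set of columns is a stopping set iff, as an edge set, it has no vertex of degree one.
Repeated edges and triangles are stopping sets of size 2 and 3, whereas in a simple
triangle-free graph such an edge set has at least four edges. So the \<open>(3,2)\<close>-decodable
\<open>m \<times> n\<close> matrices are exactly the simple triangle-free graphs with \<open>n\<close> edges on \<open>m\<close>
vertices, which exist iff \<open>4 n \<le> m\<^sup>2\<close> by Mantel's theorem and the complete bipartite graphs.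
On the covering side, a family of pairs is within distance 1 of every triple iff it contains
a pair of every triple, i.e. iff its complement is triangle-free; by Mantel again
\<open>K(m,2,3,1) = C(m,2) - \<lfloor>m\<^sup>2/4\<rfloor>\<close>. Both minima are therefore the least \<open>m\<close> with
\<open>4 n \<le> m\<^sup>2\<close>, which is \<open>\<lceil>2 \<surd>n\<rceil>\<close>.\<close>

definition pairs :: "'a set \<Rightarrow> 'a set set" where
  "pairs V = {e. e \<subseteq> V \<and> card e = 2}"

text \<open>Only meant for sets of 2-element sets: a singleton \<open>{x} = {x,x}\<close> would count as a triangle.\<close>

definition triangle_free :: "'a set set \<Rightarrow> bool" where
  "triangle_free E \<longleftrightarrow> \<not> (\<exists>x y z. {x,y} \<in> E \<and> {y,z} \<in> E \<and> {x,z} \<in> E)"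

lemma card_2_memberE:
  assumes "card e = 2" "x \<in> e"
  obtains u where "e = {x,u}" "u \<noteq> x"
  using assms by (auto simp: card_2_iff)

lemma mem_pairs_iff: "e \<in> pairs V \<longleftrightarrow> (\<exists>x y. e = {x,y} \<and> x \<noteq> y \<and> x \<in> V \<and> y \<in> V)"
  by (auto simp: pairs_def card_2_iff)

lemma finite_pairs: "finite V \<Longrightarrow> finite (pairs V)"
  unfolding pairs_def by (rule finite_subset[of _ "Pow V"]) auto

lemma card_pairs: "finite V \<Longrightarrow> card (pairs V) = card V choose 2"
  unfolding pairs_def by (rule n_subsets)

lemma triangle_free_subset: "triangle_free E \<Longrightarrow> F \<subseteq> E \<Longrightarrow> triangle_free F"
  unfolding triangle_free_def by blast

text \<open>The edges meeting \<open>{x,y}\<close> are \<open>{x,y}\<close> itself plus, for each other vertex, at most one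
edge to \<open>x\<close> or \<open>y\<close>: an edge to both would close a triangle.\<close>

lemma card_edges_at_edge_le:
  assumes "finite V" "E \<subseteq> pairs V" "triangle_free E" "{x,y} \<in> E" "x \<noteq> y"
  shows "card (E - pairs (V - {x,y})) \<le> card V - 1"
proof -
  define Nx where "Nx = {w. {x,w} \<in> E}"
  define Ny where "Ny = {w. {y,w} \<in> E} - {x}"
  have covered: "E - pairs (V - {x,y}) \<subseteq> (\<lambda>w. {x,w}) ` Nx \<union> (\<lambda>w. {y,w}) ` Ny"
  proof
    fix e assume e: "e \<in> E - pairs (V - {x,y})"
    then have "x \<in> e \<or> y \<in> e" "card e = 2"
      using assms(2) by (auto simp: pairs_def)
    then show "e \<in> (\<lambda>w. {x,w}) ` Nx \<union> (\<lambda>w. {y,w}) ` Ny"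
      using e by (elim disjE card_2_memberE) (auto simp: Nx_def Ny_def insert_commute)
  qed
  have disjoint: "Nx \<inter> Ny = {}"
    using assms(3,4) unfolding triangle_free_def Nx_def Ny_def by blast
  have "Nx \<union> Ny \<subseteq> V - {x}" "x \<in> V"
    using assms(2,4) by (auto simp: Nx_def Ny_def mem_pairs_iff doubleton_eq_iff)
  then have finite: "finite Nx" "finite Ny" and "card (Nx \<union> Ny) \<le> card V - 1"
    using assms(1) card_mono[of "V - {x}" "Nx \<union> Ny"] by (auto elim: finite_subset)
  then have bound: "card Nx + card Ny \<le> card V - 1"
    using disjoint by (simp add: card_Un_disjoint)
  have "card (E - pairs (V - {x,y})) \<le> card ((\<lambda>w. {x,w}) ` Nx \<union> (\<lambda>w. {y,w}) ` Ny)"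
    using covered finite by (intro card_mono) auto
  also have "\<dots> \<le> card Nx + card Ny"
    by (rule card_Un_le[THEN order_trans]) (intro add_mono card_image_le finite)
  also have "\<dots> \<le> card V - 1"
    by (rule bound)
  finally show ?thesis .
qed

theorem mantel:
  assumes "finite V" "E \<subseteq> pairs V" "triangle_free E"
  shows "4 * card E \<le> card V ^ 2"
  using assms
proof (induction "card V" arbitrary: V E rule: less_induct)
  case less
  show ?case
  proof (cases "E = {}")
    case False
    then obtain x y where xy: "{x,y} \<in> E" "x \<noteq> y" "x \<in> V" "y \<in> V"
      using less.prems(2) by (force simp: subset_iff mem_pairs_iff)
    let ?V' = "V - {x,y}"
    have card_V': "card ?V' = card V - 2" and two_le: "2 \<le> card V"
      using xy less.prems(1) card_mono[of V "{x,y}"] by (auto simp: card_Diff_subset)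
    have "4 * card (E \<inter> pairs ?V') \<le> card ?V' ^ 2"
      using less.prems two_le card_V'
      by (intro less.hyps) (auto intro: triangle_free_subset)
    moreover have "card E = card (E \<inter> pairs ?V') + card (E - pairs ?V')"
      using less.prems finite_pairs by (intro card_Int_Diff) (blast intro: finite_subset)
    moreover have "card (E - pairs ?V') \<le> card V - 1"
      using less.prems xy by (intro card_edges_at_edge_le)
    moreover have "(card V - 2) ^ 2 + 4 * (card V - 1) = card V ^ 2"
    proof -
      obtain c where "card V = c + 2"
        using two_le le_Suc_ex by (metis add.commute)
      then show ?thesis by (simp add: power2_eq_square algebra_simps)
    qed
    ultimately show ?thesis
      unfolding card_V' by linarith
  qed simp
qed

lemma hdist_le_1_iff_subset:
  assumes "finite A" "finite B" "card B = card A + 1"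
  shows "hdist A B \<le> 1 \<longleftrightarrow> A \<subseteq> B"
proof -
  have split: "hdist A B = card (A - B) + card (B - A)"
    unfolding hdist_def using assms by (intro card_Un_disjoint) auto
  have "1 \<le> card (B - A)"
    using diff_card_le_card_Diff[OF assms(1), of B] assms(3) by simp
  show ?thesis
  proof
    assume "hdist A B \<le> 1"
    with split have "card (A - B) = 0"
      using \<open>1 \<le> card (B - A)\<close> by linarith
    then show "A \<subseteq> B"
      using assms(1) by simp
  next
    assume "A \<subseteq> B"
    then show "hdist A B \<le> 1"
      using split assms by (simp add: card_Diff_subset)
  qed
qed

lemma card_2_subset_triple:
  assumes "A \<subseteq> {x,y,z}" "card A = 2"
  shows "A = {x,y} \<or> A = {y,z} \<or> A = {x,z}"
proof -
  obtain a b where "A = {a,b}" "a \<noteq> b"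
    using assms(2) card_2_iff by metis
  then show ?thesis
    using assms(1) by (auto simp: insert_commute)
qed

lemma covering_2_3_1_iff:
  "covering m 2 3 1 C \<longleftrightarrow> C \<subseteq> pairs {..<m} \<and> triangle_free (pairs {..<m} - C)"
proof
  assume cov: "covering m 2 3 1 C"
  then have C: "C \<subseteq> pairs {..<m}"
    by (auto simp: covering_def pairs_def)
  have False if "{x,y} \<in> pairs {..<m} - C" "{y,z} \<in> pairs {..<m} - C" "{x,z} \<in> pairs {..<m} - C"
    for x y z
  proof -
    have B: "{x,y,z} \<subseteq> {..<m}" "card {x,y,z} = 3"
      using that by (auto simp: mem_pairs_iff doubleton_eq_iff)
    then obtain A where A: "A \<in> C" "hdist A {x,y,z} \<le> 1"
      using cov unfolding covering_def by blast
    with C have "A \<subseteq> {x,y,z}" "card A = 2"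
      using B hdist_le_1_iff_subset[of A "{x,y,z}"] by (auto simp: pairs_def card_ge_0_finite)
    then have "A = {x,y} \<or> A = {y,z} \<or> A = {x,z}"
      by (rule card_2_subset_triple)
    then show False
      using A(1) that by auto
  qed
  with C show "C \<subseteq> pairs {..<m} \<and> triangle_free (pairs {..<m} - C)"
    unfolding triangle_free_def by blast
next
  assume C: "C \<subseteq> pairs {..<m} \<and> triangle_free (pairs {..<m} - C)"
  have "\<exists>A\<in>C. hdist A B \<le> 1" if B: "B \<subseteq> {..<m}" "card B = 3" for B
  proof -
    obtain x y z where xyz: "B = {x,y,z}" "x \<noteq> y" "y \<noteq> z" "x \<noteq> z"
      using B(2) card_3_iff by metis
    moreover have "{x,y} \<in> pairs {..<m}" "{y,z} \<in> pairs {..<m}" "{x,z} \<in> pairs {..<m}"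
      using xyz B(1) by (auto simp: pairs_def)
    ultimately have "{x,y} \<in> C \<or> {y,z} \<in> C \<or> {x,z} \<in> C"
      using C unfolding triangle_free_def by blast
    then obtain A where "A \<in> C" "A \<subseteq> B"
      using xyz by blast
    moreover have "card A = 2" "finite B"
      using \<open>A \<in> C\<close> C B by (auto simp: pairs_def finite_subset)
    ultimately show ?thesis
      using hdist_le_1_iff_subset[of A B] B(2) by (auto simp: finite_subset)
  qed
  with C show "covering m 2 3 1 C"
    unfolding covering_def pairs_def by blast
qed

definition cross_pairs :: "nat \<Rightarrow> nat \<Rightarrow> nat set set" where
  "cross_pairs h m = (\<lambda>(a,b). {a,b}) ` ({..<h} \<times> {h..<m})"

lemma card_cross_pairs: "card (cross_pairs h m) = h * (m - h)"
proof -
  have "inj_on (\<lambda>(a,b). {a,b}) ({..<h} \<times> {h..<m})"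
    by (auto simp: inj_on_def doubleton_eq_iff)
  then show ?thesis
    unfolding cross_pairs_def by (simp add: card_image card_cartesian_product)
qed

lemma cross_pairs_subset_pairs: "cross_pairs h m \<subseteq> pairs {..<m}"
  by (auto simp: cross_pairs_def pairs_def)

lemma triangle_free_cross_pairs: "triangle_free (cross_pairs h m)"
  by (auto simp: triangle_free_def cross_pairs_def doubleton_eq_iff)

lemma four_mult_le_square_iff: "4 * (d::nat) \<le> m\<^sup>2 \<longleftrightarrow> d \<le> m div 2 * (m - m div 2)"
proof (cases "even m")
  case True
  then obtain k where "m = 2 * k" by blast
  then show ?thesis by (simp add: power2_eq_square)
next
  case False
  then obtain k where m: "m = 2 * k + 1" using oddE by blast
  have "m\<^sup>2 = 4 * (k * k + k) + 1" "m div 2 * (m - m div 2) = k * k + k"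
    using m by (simp_all add: power2_eq_square algebra_simps)
  then show ?thesis by presburger
qed

lemma K_2_3_1: "K m 2 3 1 + m div 2 * (m - m div 2) = m choose 2"
proof -
  let ?P = "pairs {..<m}" and ?X = "cross_pairs (m div 2) m"
  have "covering m 2 3 1 (?P - ?X)"
    unfolding covering_2_3_1_iff
    using cross_pairs_subset_pairs triangle_free_cross_pairs by (simp add: Diff_Diff_Int Int_absorb1)
  moreover have "card ?P - card ?X \<le> card C" if "covering m 2 3 1 C" for C
  proof -
    have C: "C \<subseteq> ?P" "triangle_free (?P - C)"
      using that unfolding covering_2_3_1_iff by auto
    then have "4 * card (?P - C) \<le> m\<^sup>2"
      using mantel[of "{..<m}" "?P - C"] by auto
    then have "card (?P - C) \<le> card ?X"
      by (simp add: four_mult_le_square_iff card_cross_pairs)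
    moreover have "card ?P \<le> card C + card (?P - C)"
      using card_Un_le[of C "?P - C"] C(1) card_mono[of "C \<union> (?P - C)" ?P]
      by (simp add: Un_absorb1 finite_pairs)
    ultimately show ?thesis by linarith
  qed
  moreover have "card (?P - ?X) = card ?P - card ?X"
    using cross_pairs_subset_pairs[of "m div 2" m] finite_pairs[of "{..<m}"]
    by (simp add: card_Diff_subset finite_subset)
  ultimately have "K m 2 3 1 = card ?P - card ?X"
    unfolding K_def by (intro Least_equality) metis+
  moreover have "card ?X \<le> card ?P"
    using cross_pairs_subset_pairs by (intro card_mono finite_pairs) auto
  ultimately show ?thesis
    by (simp add: card_pairs card_cross_pairs)
qed

text \<open>An edge \<open>{x,y}\<close>, further edges \<open>{x,u}\<close> and \<open>{y,w}\<close> with \<open>u \<noteq> w\<close> by triangle-freeness,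
and a further edge at \<open>u\<close> are four distinct edges.\<close>

lemma triangle_free_no_degree_one_card_ge_4:
  assumes "\<forall>e\<in>S. card e = 2" "triangle_free S" "finite S" "S \<noteq> {}"
    and no_leaf: "\<forall>e\<in>S. \<forall>x\<in>e. \<exists>e'\<in>S. e' \<noteq> e \<and> x \<in> e'"
  shows "4 \<le> card S"
proof -
  obtain x y where e: "{x,y} \<in> S" "x \<noteq> y"
    using assms(1,4) by (metis all_not_in_conv card_2_iff)
  obtain e1 where e1: "e1 \<in> S" "e1 \<noteq> {x,y}" "x \<in> e1"
    using no_leaf e(1) by blast
  then obtain u where u: "e1 = {x,u}" "u \<noteq> x"
    using assms(1) card_2_memberE[of e1 x] by blast
  obtain e2 where e2: "e2 \<in> S" "e2 \<noteq> {x,y}" "y \<in> e2"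
    using no_leaf e(1) by blast
  then obtain w where w: "e2 = {y,w}" "w \<noteq> y"
    using assms(1) card_2_memberE[of e2 y] by blast
  have "u \<noteq> y" "w \<noteq> x"
    using e1 e2 u w by (auto simp: insert_commute)
  have "u \<noteq> w"
    using assms(2) e(1) e1 e2 u w unfolding triangle_free_def by blast
  obtain e3 where e3: "e3 \<in> S" "e3 \<noteq> e1" "u \<in> e3"
    using no_leaf e1(1) u(1) by blast
  then obtain t where t: "e3 = {u,t}" "t \<noteq> u"
    using assms(1) card_2_memberE[of e3 u] by blast
  have "t \<noteq> x"
    using e3 t u by (auto simp: insert_commute)
  have "card {{x,y}, e1, e2, e3} = 4"
    using e u w t e3(2) \<open>u \<noteq> y\<close> \<open>w \<noteq> x\<close> \<open>u \<noteq> w\<close> \<open>t \<noteq> x\<close>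
    by (auto simp: doubleton_eq_iff)
  moreover have "{{x,y}, e1, e2, e3} \<subseteq> S"
    using e e1 e2 e3 by blast
  ultimately show ?thesis
    using card_mono[OF assms(3)] by metis
qed

definition column :: "nat \<Rightarrow> (nat \<Rightarrow> nat \<Rightarrow> bool) \<Rightarrow> nat \<Rightarrow> nat set" where
  "column m M j = {i. i < m \<and> M i j}"

lemma stopping_set_iff:
  "stopping_set m n M S \<longleftrightarrow> S \<noteq> {} \<and> S \<subseteq> {..<n} \<and>
     (\<forall>k\<in>S. \<forall>i\<in>column m M k. \<exists>k'\<in>S. k' \<noteq> k \<and> i \<in> column m M k')"
proof -
  have "card {j\<in>S. M i j} \<noteq> 1 \<longleftrightarrow> (\<forall>k\<in>S. M i k \<longrightarrow> (\<exists>k'\<in>S. k' \<noteq> k \<and> M i k'))" for i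
    by (auto simp: card_1_singleton_iff)
  then show ?thesis
    unfolding stopping_set_def column_def by auto
qed

lemma le_stop_num_iff: "enat d \<le> stop_num m n M \<longleftrightarrow> (\<forall>S. stopping_set m n M S \<longrightarrow> d \<le> card S)"
  unfolding stop_num_def by (auto simp: le_Inf_iff)

lemma decodable_3_2_imp_simple_triangle_free:
  assumes "decodable m n 3 2 M"
  shows "inj_on (column m M) {..<n} \<and> triangle_free (column m M ` {..<n})"
proof
  have weight: "\<forall>j<n. card (column m M j) = 2"
    and large: "\<And>S. stopping_set m n M S \<Longrightarrow> 4 \<le> card S"
    using assms unfolding decodable_def column_def le_stop_num_iff by auto
  show "inj_on (column m M) {..<n}"
  proof (rule inj_onI, rule ccontr)
    fix j j' assume "j \<in> {..<n}" "j' \<in> {..<n}" "column m M j = column m M j'" "j \<noteq> j'"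
    then have "stopping_set m n M {j,j'}"
      unfolding stopping_set_iff by auto
    with large \<open>j \<noteq> j'\<close> show False
      by fastforce
  qed
  show "triangle_free (column m M ` {..<n})"
    unfolding triangle_free_def
  proof
    assume "\<exists>x y z. {x,y} \<in> column m M ` {..<n} \<and> {y,z} \<in> column m M ` {..<n} \<and> {x,z} \<in> column m M ` {..<n}"
    then obtain x y z where
      "{x,y} \<in> column m M ` {..<n}" "{y,z} \<in> column m M ` {..<n}" "{x,z} \<in> column m M ` {..<n}"
      by blast
    then obtain j1 j2 j3 where j: "j1 < n" "j2 < n" "j3 < n"
      and cols: "column m M j1 = {x,y}" "column m M j2 = {y,z}" "column m M j3 = {x,z}"
      by (auto simp: image_iff)
    then have "card {x,y} = 2" "card {y,z} = 2" "card {x,z} = 2"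
      using weight by (simp_all flip: cols)
    then have "x \<noteq> y" "y \<noteq> z" "x \<noteq> z"
      by auto
    with j cols have "stopping_set m n M {j1,j2,j3}"
      unfolding stopping_set_iff by (auto simp: doubleton_eq_iff)
    moreover have "card {j1,j2,j3} \<le> 3"
      by (simp add: card_insert_le_m1)
    ultimately show False
      using large by fastforce
  qed
qed

lemma decodable_3_2_if_simple_triangle_free:
  assumes "\<forall>j<n. card (column m M j) = 2" "inj_on (column m M) {..<n}"
    "triangle_free (column m M ` {..<n})"
  shows "decodable m n 3 2 M"
proof -
  have "4 \<le> card S" if S: "stopping_set m n M S" for S
  proof -
    have S_sub: "S \<subseteq> {..<n}" and "S \<noteq> {}"
      and no_leaf: "\<forall>k\<in>S. \<forall>i\<in>column m M k. \<exists>k'\<in>S. k' \<noteq> k \<and> i \<in> column m M k'"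
      using S unfolding stopping_set_iff by auto
    have inj: "inj_on (column m M) S"
      using assms(2) S_sub inj_on_subset by blast
    have "4 \<le> card (column m M ` S)"
    proof (rule triangle_free_no_degree_one_card_ge_4)
      show "\<forall>e\<in>column m M ` S. card e = 2"
        using assms(1) S_sub by auto
      show "triangle_free (column m M ` S)"
        using assms(3) S_sub by (meson image_mono triangle_free_subset)
      show "finite (column m M ` S)"
        using S_sub finite_subset by blast
      show "column m M ` S \<noteq> {}"
        using \<open>S \<noteq> {}\<close> by blast
      show "\<forall>e\<in>column m M ` S. \<forall>x\<in>e. \<exists>e'\<in>column m M ` S. e' \<noteq> e \<and> x \<in> e'"
      proof (intro ballI)
        fix e i assume "e \<in> column m M ` S" "i \<in> e"
        then obtain k where k: "k \<in> S" "e = column m M k"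
          by blast
        then obtain k' where "k' \<in> S" "k' \<noteq> k" "i \<in> column m M k'"
          using no_leaf \<open>i \<in> e\<close> by blast
        then show "\<exists>e'\<in>column m M ` S. e' \<noteq> e \<and> i \<in> e'"
          using inj k by (metis image_eqI inj_onD)
      qed
    qed
    also have "\<dots> = card S"
      using inj by (rule card_image)
    finally show ?thesis .
  qed
  with assms(1) show ?thesis
    unfolding decodable_def le_stop_num_iff column_def by simp
qed

lemma decodable_3_2_iff:
  "decodable m n 3 2 M \<longleftrightarrow>
     (\<forall>j<n. card (column m M j) = 2) \<and> inj_on (column m M) {..<n} \<and>
     triangle_free (column m M ` {..<n})"
  using decodable_3_2_imp_simple_triangle_free decodable_3_2_if_simple_triangle_free
  by (auto simp: decodable_def column_def)

lemma ex_decodable_3_2_iff: "(\<exists>M. decodable m n 3 2 M) \<longleftrightarrow> 4 * n \<le> m\<^sup>2"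
proof
  assume "\<exists>M. decodable m n 3 2 M"
  then obtain M where cols: "\<forall>j<n. card (column m M j) = 2" "inj_on (column m M) {..<n}"
    "triangle_free (column m M ` {..<n})"
    unfolding decodable_3_2_iff by blast
  have "column m M ` {..<n} \<subseteq> pairs {..<m}"
    using cols(1) by (auto simp: pairs_def column_def)
  then have "4 * card (column m M ` {..<n}) \<le> card {..<m} ^ 2"
    using cols(3) by (intro mantel) auto
  then show "4 * n \<le> m\<^sup>2"
    using cols(2) by (simp add: card_image)
next
  assume "4 * n \<le> m\<^sup>2"
  then have "card {..<n} \<le> card (cross_pairs (m div 2) m)"
    by (simp add: four_mult_le_square_iff card_cross_pairs)
  then obtain f where f: "f ` {..<n} \<subseteq> cross_pairs (m div 2) m" "inj_on f {..<n}"
    using card_le_inj[of "{..<n}" "cross_pairs (m div 2) m"] by (auto simp: cross_pairs_def)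
  have f_pairs: "f j \<in> pairs {..<m}" if "j < n" for j
    using f(1) cross_pairs_subset_pairs that by blast
  define M where "M i j \<longleftrightarrow> i \<in> f j" for i j
  have column: "column m M j = f j" if "j < n" for j
    using f_pairs[OF that] by (auto simp: column_def M_def pairs_def)
  have "decodable m n 3 2 M"
    unfolding decodable_3_2_iff
  proof (intro conjI allI impI)
    show "card (column m M j) = 2" if "j < n" for j
      using f_pairs[OF that] column[OF that] by (simp add: pairs_def)
    show "inj_on (column m M) {..<n}"
      using f(2) column by (simp add: inj_on_def)
    show "triangle_free (column m M ` {..<n})"
      using f(1) column triangle_free_subset[OF triangle_free_cross_pairs] by simp
  qed
  then show "\<exists>M. decodable m n 3 2 M"
    by blast
qed

lemma ceiling_sqrt_eq_Least: "\<lceil>sqrt (real k)\<rceil> = int (LEAST m. k \<le> m\<^sup>2)"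
proof -
  define L where "L = (LEAST m. k \<le> m\<^sup>2)"
  have "k \<le> L\<^sup>2"
    unfolding L_def by (rule LeastI[of _ k]) (simp add: power2_eq_square)
  then have "sqrt (real k) \<le> real L"
    by (intro real_le_lsqrt) (simp_all flip: of_nat_power)
  moreover have "real L - 1 < sqrt (real k)"
  proof (cases L)
    case 0
    have "0 \<le> sqrt (real k)"
      by simp
    then show ?thesis
      using 0 by linarith
  next
    case (Suc l)
    then have "\<not> k \<le> l\<^sup>2"
      using not_less_Least[of l "\<lambda>m. k \<le> m\<^sup>2"] unfolding L_def by simp
    then have "(real L - 1)\<^sup>2 < real k"
      using Suc by (simp flip: of_nat_power)
    then show ?thesis
      by (rule real_less_rsqrt)
  qed
  ultimately show ?thesis
    unfolding L_def by (intro ceiling_unique) auto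
qed

theorem theorem6p3:
  fixes n :: nat
  assumes "n \<ge> 1"
  shows "mstar n 3 2 = (LEAST m. int (m choose 2) - int (K m 2 3 1) \<ge> int n)
       \<and> int (mstar n 3 2) = \<lceil>2 * sqrt (real n)\<rceil>"
proof -
  have "int (m choose 2) - int (K m 2 3 1) \<ge> int n \<longleftrightarrow> 4 * n \<le> m\<^sup>2" for m
    using K_2_3_1[of m] four_mult_le_square_iff[of n m] by linarith
  moreover have "mstar n 3 2 = (LEAST m. 4 * n \<le> m\<^sup>2)"
    unfolding mstar_def ex_decodable_3_2_iff ..
  moreover have "\<lceil>2 * sqrt (real n)\<rceil> = int (LEAST m. 4 * n \<le> m\<^sup>2)"
    using ceiling_sqrt_eq_Least[of "4 * n"] by (simp add: real_sqrt_mult)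
  ultimately show ?thesis
    by simp
qed

end
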